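(* Consider an instance of the MSSN-MC-HC problem with $m=|Q|$ sources and costs $c_s>0$, $c_r>0$, and suppose $\frac{c_s}{c_r}\ge \overline{m}(\overline{m}+1)(h_{\max}-1)$ for some integer $\overline{m}$ with $1\le \overline{m}<m$. Consider any iteration $j$ of the greedy phase of SmartSelect at which the number $u$ of uncovered sources satisfies $u>\overline{m}$. Suppose $b_1,b_2\in B^{(j)}$ are unpicked sinks such that $Q_1^{(j)}$ equals the set of all currently uncovered sources, and $1\le |Q_2^{(j)}|\le \overline{m}$. Then $C_1^{(j)}\le C_2^{(j)}$, i.e., the algorithm does not favor $b_2$ over $b_1$.
   Context: MSSN-MC-HC problem: given a finite undirected graph $G=(V,E)$ with $V=Q\cup R\cup B$ (pairwise disjoint; $Q$ = sources, $R$ = potential relay locations, $B$ = potential sink locations), costs $c_s$ per sink and $c_r$ per relay, and a positive integer $h_{\max}$, select $B'\subseteq B$, $R'\subseteq R$ such that in the subgraph induced by $Q\cup R'\cup B'$ every source has a path of at most $h_{\max}$ edges to some sink of $B'$, minimizing $c_s|B'|+c_r|R'|$. SmartSelect algorithm: (1) If for some $b\in B$ every source has a path of at most $h_{\max}$ edges to $b$ in the subgraph induced by $Q\cup B$, output $(\{b\},\emptyset)$. (2) If some source has no path of at most $h_{\max}$ edges in $G$ to any sink, declare infeasible. (3) For each $b_i\in B$ let $Q_i$ be the set of sources whose shortest path to $b_i$ in $G$ has at most $h_{\max}$ edges, and $R_i$ the set of relays whose shortest path to $b_i$ has at most $h_{\max}-1$ edges. (4) Greedy phase, iterations $j=0,1,\dots$: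 $B^{(0)}=B$, $Q_i^{(0)}=Q_i$; $B^{(j)}$ is the set of sinks not yet picked and $Q_i^{(j)}$ the set of sources of $Q_i$ not yet covered. In iteration $j$, for each $b_i\in B^{(j)}$, a relay-selection subroutine (e.g. the SPTiRP algorithm) applied to the subgraph of $G$ induced by $Q_i^{(j)}\cup R_i\cup\{b_i\}$ returns a set $\hat R_i^{(j)}\subseteq R_i$ consisting of the relays on one chosen path of at most $h_{\max}$ edges from each source of $Q_i^{(j)}$ to $b_i$ (so every source of $Q_i^{(j)}$ reaches $b_i$ within $h_{\max}$ hops using only $Q_i^{(j)}\cup\hat R_i^{(j)}\cup\{b_i\}$). Let $n_i^{(j)}$ be the number of relays in $\hat R_i^{(j)}$ not selected in earlier iterations (earlier-selected relays have cost zero thereafter), and $C_i^{(j)}=\frac{c_s+c_r n_i^{(j)}}{|Q_i^{(j)}|}$. The sink $b_i$ with least $C_i^{(j)}$ is picked (ties broken in favor of larger $|Q_i^{(j)}|$), its sources $Q_i^{(j)}$ become covered and the relays $\hat R_i^{(j)}$ are selected. Stop when all sources are covered; output the picked sinks and selected relays. *)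

theory Defs
  imports Complex_Main
begin

definition mssn_instance :: "('v \<Rightarrow> 'v \<Rightarrow> bool) \<Rightarrow> 'v set \<Rightarrow> 'v set \<Rightarrow> 'v set \<Rightarrow> bool" where
  "mssn_instance E Q R B \<longleftrightarrow>
     finite (Q \<union> R \<union> B) \<and> Q \<inter> R = {} \<and> Q \<inter> B = {} \<and> R \<inter> B = {} \<and>
     (\<forall>x y. E x y \<longrightarrow> E y x) \<and> (\<forall>x. \<not> E x x) \<and>
     (\<forall>x y. E x y \<longrightarrow> x \<in> Q \<union> R \<union> B \<and> y \<in> Q \<union> R \<union> B)"

text \<open>A (simple) path from s to t in the subgraph induced by W, given as its vertex list;
  its number of edges is length p - 1.\<close>
definition is_path :: "('v \<Rightarrow> 'v \<Rightarrow> bool) \<Rightarrow> 'v set \<Rightarrow> 'v list \<Rightarrow> 'v \<Rightarrow> 'v \<Rightarrow> bool" where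
  "is_path E W p s t \<longleftrightarrow> p \<noteq> [] \<and> hd p = s \<and> last p = t \<and> set p \<subseteq> W \<and> distinct p \<and>
     (\<forall>i. Suc i < length p \<longrightarrow> E (p ! i) (p ! Suc i))"

definition reach_within :: "('v \<Rightarrow> 'v \<Rightarrow> bool) \<Rightarrow> 'v set \<Rightarrow> 'v \<Rightarrow> 'v \<Rightarrow> nat \<Rightarrow> bool" where
  "reach_within E W s t k \<longleftrightarrow> (\<exists>p. is_path E W p s t \<and> length p - 1 \<le> k)"

definition srcs_of :: "('v \<Rightarrow> 'v \<Rightarrow> bool) \<Rightarrow> 'v set \<Rightarrow> 'v set \<Rightarrow> 'v set \<Rightarrow> nat \<Rightarrow> 'v \<Rightarrow> 'v set" where
  "srcs_of E Q R B h b = {q \<in> Q. reach_within E (Q \<union> R \<union> B) q b h}"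

definition rels_of :: "('v \<Rightarrow> 'v \<Rightarrow> bool) \<Rightarrow> 'v set \<Rightarrow> 'v set \<Rightarrow> 'v set \<Rightarrow> nat \<Rightarrow> 'v \<Rightarrow> 'v set" where
  "rels_of E Q R B h b = {r \<in> R. reach_within E (Q \<union> R \<union> B) r b (h - 1)}"

text \<open>Admissible output Rh of the relay-selection subroutine for sink b when U is the set
  of uncovered sources: the relays on one chosen path of at most h edges from each source
  of Q_i \<inter> U to b, inside the subgraph induced by (Q_i \<inter> U) \<union> R_i \<union> {b}.\<close>
definition sub_out :: "('v \<Rightarrow> 'v \<Rightarrow> bool) \<Rightarrow> 'v set \<Rightarrow> 'v set \<Rightarrow> 'v set \<Rightarrow> nat \<Rightarrow> 'v set \<Rightarrow> 'v \<Rightarrow> 'v set \<Rightarrow> bool" where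
  "sub_out E Q R B h U b Rh \<longleftrightarrow>
     (\<exists>P. (\<forall>s \<in> srcs_of E Q R B h b \<inter> U.
             is_path E ((srcs_of E Q R B h b \<inter> U) \<union> rels_of E Q R B h b \<union> {b}) (P s) s b \<and>
             length (P s) - 1 \<le> h) \<and>
          Rh = (\<Union>s \<in> srcs_of E Q R B h b \<inter> U. set (P s) \<inter> R))"

text \<open>C_i^{(j)} = (c_s + c_r n_i^{(j)}) / |Q_i^{(j)}|, where S are the relays selected earlier.\<close>
definition sink_cost :: "('v \<Rightarrow> 'v \<Rightarrow> bool) \<Rightarrow> 'v set \<Rightarrow> 'v set \<Rightarrow> 'v set \<Rightarrow> nat \<Rightarrow> real \<Rightarrow> real \<Rightarrow>
    'v set \<Rightarrow> 'v set \<Rightarrow> 'v \<Rightarrow> 'v set \<Rightarrow> real" where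
  "sink_cost E Q R B h cs cr U S b Rh =
     (cs + cr * real (card (Rh - S))) / real (card (srcs_of E Q R B h b \<inter> U))"

definition step1_applies :: "('v \<Rightarrow> 'v \<Rightarrow> bool) \<Rightarrow> 'v set \<Rightarrow> 'v set \<Rightarrow> 'v set \<Rightarrow> nat \<Rightarrow> bool" where
  "step1_applies E Q R B h \<longleftrightarrow> (\<exists>b \<in> B. \<forall>q \<in> Q. reach_within E (Q \<union> B) q b h)"

definition feasible :: "('v \<Rightarrow> 'v \<Rightarrow> bool) \<Rightarrow> 'v set \<Rightarrow> 'v set \<Rightarrow> 'v set \<Rightarrow> nat \<Rightarrow> bool" where
  "feasible E Q R B h \<longleftrightarrow> (\<forall>q \<in> Q. \<exists>b \<in> B. reach_within E (Q \<union> R \<union> B) q b h)"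

text \<open>State (U, S, P): uncovered sources, relays
  selected so far, sinks picked so far. sel gives the subroutine's output for each
  candidate sink (unpicked sinks that can still cover some uncovered source).\<close>
inductive greedy_step :: "('v \<Rightarrow> 'v \<Rightarrow> bool) \<Rightarrow> 'v set \<Rightarrow> 'v set \<Rightarrow> 'v set \<Rightarrow> nat \<Rightarrow> real \<Rightarrow> real \<Rightarrow>
    'v set \<times> 'v set \<times> 'v set \<Rightarrow> 'v set \<times> 'v set \<times> 'v set \<Rightarrow> bool"
  for E Q R B h cs cr where
  "\<lbrakk> U \<noteq> {};
     \<forall>b \<in> B - P. srcs_of E Q R B h b \<inter> U \<noteq> {} \<longrightarrow> sub_out E Q R B h U b (sel b);
     b0 \<in> B - P; srcs_of E Q R B h b0 \<inter> U \<noteq> {};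
     \<forall>b \<in> B - P. srcs_of E Q R B h b \<inter> U \<noteq> {} \<longrightarrow>
        sink_cost E Q R B h cs cr U S b0 (sel b0) \<le> sink_cost E Q R B h cs cr U S b (sel b) \<and>
        (sink_cost E Q R B h cs cr U S b0 (sel b0) = sink_cost E Q R B h cs cr U S b (sel b) \<longrightarrow>
           card (srcs_of E Q R B h b \<inter> U) \<le> card (srcs_of E Q R B h b0 \<inter> U)) \<rbrakk>
   \<Longrightarrow> greedy_step E Q R B h cs cr (U, S, P)
         (U - srcs_of E Q R B h b0, S \<union> sel b0, insert b0 P)"

end

theory Submission
  imports Defs
begin

text \<open>A relay-selection output for a sink b covering k sources consists of at most k paths
  with at most h edges each; relays are interior vertices, so each path contributes at most
  h - 1 of them and the sink's cost is at most (c_s + c_r k (h - 1)) / k =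
  c_s / k + c_r (h - 1). Once the uncovered set U is larger than m, the sink covering all
  of U therefore costs at most c_s / (m + 1) + c_r (h - 1) \<le> c_s / m, which is a lower
  bound for the cost of any sink covering at most m sources.\<close>

lemma card_interior_path_le:
  assumes "is_path E W p s t" "length p - 1 \<le> h" "s \<notin> R" "t \<notin> R" "s \<noteq> t"
  shows "card (set p \<inter> R) \<le> h - 1"
proof -
  have "distinct p" "s \<in> set p" "t \<in> set p"
    using assms(1) unfolding is_path_def by (auto intro: hd_in_set last_in_set)
  have "set p \<inter> R \<subseteq> set p - {s, t}" using assms(3,4) by auto
  then have "card (set p \<inter> R) \<le> card (set p - {s, t})" by (intro card_mono) auto
  also have "\<dots> = length p - 2"
    using \<open>distinct p\<close> \<open>s \<in> set p\<close> \<open>t \<in> set p\<close> \<open>s \<noteq> t\<close>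
    by (simp add: card_Diff_subset distinct_card)
  finally show ?thesis using assms(2) by linarith
qed

lemma card_sub_out_le:
  assumes inst: "mssn_instance E Q R B" and "b \<in> B" and "sub_out E Q R B h U b Rh"
  shows "card Rh \<le> card (srcs_of E Q R B h b \<inter> U) * (h - 1)"
proof -
  let ?C = "srcs_of E Q R B h b \<inter> U"
  obtain P where paths: "\<And>s. s \<in> ?C \<Longrightarrow>
        is_path E (?C \<union> rels_of E Q R B h b \<union> {b}) (P s) s b \<and> length (P s) - 1 \<le> h"
    and Rh: "Rh = (\<Union>s \<in> ?C. set (P s) \<inter> R)"
    using assms(3) unfolding sub_out_def by blast
  have disj: "Q \<inter> R = {}" "Q \<inter> B = {}" "R \<inter> B = {}" and "finite Q"
    using inst unfolding mssn_instance_def by auto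
  have "?C \<subseteq> Q" unfolding srcs_of_def by auto
  then have "finite ?C" using \<open>finite Q\<close> by (rule finite_subset)
  have per_path: "card (set (P s) \<inter> R) \<le> h - 1" if "s \<in> ?C" for s
    using paths[OF that] \<open>?C \<subseteq> Q\<close> that \<open>b \<in> B\<close> disj
    by (intro card_interior_path_le[of E _ _ s b]) auto
  have "card Rh \<le> (\<Sum>s \<in> ?C. card (set (P s) \<inter> R))"
    unfolding Rh using \<open>finite ?C\<close> by (rule card_UN_le)
  also have "\<dots> \<le> card ?C * (h - 1)"
    using sum_bounded_above[of ?C "\<lambda>s. card (set (P s) \<inter> R)" "h - 1"] per_path by auto
  finally show ?thesis .
qed

lemma covering_sink_cost_le:
  fixes cs cr n1 n2 u q m k :: real
  assumes "cs > 0" "cr > 0" "m \<ge> 1" "u \<ge> m + 1" "1 \<le> q" "q \<le> m"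
    and "n1 \<le> u * k" "n2 \<ge> 0" and ratio: "cr * k \<le> cs / (m * (m + 1))"
  shows "(cs + cr * n1) / u \<le> (cs + cr * n2) / q"
proof -
  have "m > 0" "u > 0" using assms(3,4) by linarith+
  have "(cs + cr * n1) / u \<le> (cs + cr * (u * k)) / u"
    using assms(2,7) \<open>u > 0\<close> by (intro divide_right_mono) auto
  also have "\<dots> = cs / u + cr * k" using \<open>u > 0\<close> by (simp add: field_simps)
  also have "\<dots> \<le> cs / (m + 1) + cs / (m * (m + 1))"
    using assms(1,3,4) ratio by (intro add_mono divide_left_mono) auto
  also have "\<dots> = cs / m"
    using \<open>m > 0\<close> by (simp add: divide_simps) (simp add: algebra_simps)
  also have "\<dots> \<le> cs / q" using assms(1,5,6) by (intro divide_left_mono) auto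
  also have "\<dots> \<le> (cs + cr * n2) / q" using assms(2,5,8) by (intro divide_right_mono) auto
  finally show ?thesis .
qed

theorem lemma1:
  fixes E :: "'v \<Rightarrow> 'v \<Rightarrow> bool" and Q R B U S P Rh1 Rh2 :: "'v set"
    and h mbar :: nat and cs cr :: real and b1 b2 :: 'v
  assumes inst: "mssn_instance E Q R B"
    and h: "1 \<le> h"
    and cs: "cs > 0" and cr: "cr > 0"
    and mbar: "1 \<le> mbar" "mbar < card Q"
    and ratio: "cs / cr \<ge> real mbar * (real mbar + 1) * (real h - 1)"
    and not1: "\<not> step1_applies E Q R B h"
    and feas: "feasible E Q R B h"
    and reach: "(greedy_step E Q R B h cs cr)\<^sup>*\<^sup>* (Q, {}, {}) (U, S, P)"
    and u: "card U > mbar"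
    and b1: "b1 \<in> B - P" and b2: "b2 \<in> B - P"
    and Q1: "srcs_of E Q R B h b1 \<inter> U = U"
    and Q2: "1 \<le> card (srcs_of E Q R B h b2 \<inter> U)" "card (srcs_of E Q R B h b2 \<inter> U) \<le> mbar"
    and R1: "sub_out E Q R B h U b1 Rh1" and R2: "sub_out E Q R B h U b2 Rh2"
  shows "sink_cost E Q R B h cs cr U S b1 Rh1 \<le> sink_cost E Q R B h cs cr U S b2 Rh2"
proof -
  have "finite Rh1"
    using R1 inst unfolding sub_out_def mssn_instance_def by (auto intro: finite_subset)
  then have "card (Rh1 - S) \<le> card Rh1" by (intro card_mono) auto
  also have "\<dots> \<le> card U * (h - 1)" using card_sub_out_le[OF inst _ R1] b1 Q1 by simp
  finally have "real (card (Rh1 - S)) \<le> real (card U) * (real h - 1)"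
    using h by (metis of_nat_1 of_nat_diff of_nat_le_iff of_nat_mult)
  moreover have "cr * (real h - 1) \<le> cs / (real mbar * (real mbar + 1))"
  proof -
    have "cr * (real h - 1) * (real mbar * (real mbar + 1)) \<le> cs"
      using ratio cr by (simp add: pos_le_divide_eq mult_ac)
    then show ?thesis using mbar(1) by (simp add: pos_le_divide_eq)
  qed
  ultimately show ?thesis
    unfolding sink_cost_def Q1 using cs cr h mbar(1) u Q2
    by (intro covering_sink_cost_le[where m = "real mbar" and k = "real h - 1"]) auto
qed

end
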